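(* Let $F$ be a field of characteristic zero and let $Q$ be a finite quiver with vertex set $Q_0=\{1,\dots,n\}$ such that the path algebra $FQ$ is a PI algebra. Let \[A_Q=\{A\in M_n(F)\mid A_{i,j}=0 \text{ whenever there is no path in } Q \text{ from } i \text{ to } j\}.\] Then $\mathrm{Id}(FQ)=\mathrm{Id}(A_Q)$.
   Context: Paths in $Q$ include the length-zero paths $e_i$ at each vertex $i$ (so there is always a path from $i$ to $i$). The path algebra $FQ$ is the $F$-vector space with basis all paths of $Q$, with product of paths $p,q$ equal to the concatenation $pq$ if the terminal vertex of $p$ equals the starting vertex of $q$, and $0$ otherwise. $M_n(F)$ is the algebra of $n\times n$ matrices over $F$. For an $F$-algebra $A$, $\mathrm{Id}(A)$ denotes the T-ideal of the free associative algebra $F\langle X\rangle$ consisting of all polynomial identities satisfied by $A$; $A$ is PI if $\mathrm{Id}(A)\neq\{0\}$. *)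

theory Defs
  imports Main "HOL-Library.Poly_Mapping" "HOL-Library.Function_Algebras"
begin

text \<open>The free associative algebra F<X> over the countable set of variables
  X = {x_0, x_1, ...}: finitely supported F-linear combinations of words
  (lists of variable indices).\<close>

type_synonym 'a ncpoly = "nat list \<Rightarrow>\<^sub>0 'a"

text \<open>Evaluation of a noncommutative polynomial in an algebra whose additive
  group is the type 'b, with multiplication mul, unit one and scalar
  multiplication sm, under the substitution phi of the variables.\<close>

definition nc_eval_word :: "('b \<Rightarrow> 'b \<Rightarrow> 'b) \<Rightarrow> 'b \<Rightarrow> (nat \<Rightarrow> 'b) \<Rightarrow> nat list \<Rightarrow> 'b" where
  "nc_eval_word mul one \<phi> w = foldr (\<lambda>x acc. mul (\<phi> x) acc) w one"

definition nc_eval :: "('b::comm_monoid_add \<Rightarrow> 'b \<Rightarrow> 'b) \<Rightarrow> 'b \<Rightarrow> ('a::zero \<Rightarrow> 'b \<Rightarrow> 'b)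
    \<Rightarrow> (nat \<Rightarrow> 'b) \<Rightarrow> 'a ncpoly \<Rightarrow> 'b" where
  "nc_eval mul one sm \<phi> f = (\<Sum>w\<in>Poly_Mapping.keys f. sm (Poly_Mapping.lookup f w) (nc_eval_word mul one \<phi> w))"

definition PI_Id :: "('b::comm_monoid_add \<Rightarrow> 'b \<Rightarrow> 'b) \<Rightarrow> 'b \<Rightarrow> ('a::zero \<Rightarrow> 'b \<Rightarrow> 'b)
    \<Rightarrow> 'b set \<Rightarrow> 'a ncpoly set" where
  "PI_Id mul one sm S = {f. \<forall>\<phi>. (\<forall>x. \<phi> x \<in> S) \<longrightarrow> nc_eval mul one sm \<phi> f = 0}"

text \<open>A finite quiver Q: vertex set {1..n}, arrow set E (finite) with source
  map s and target map t.  A path is a pair (v, es): start vertex v and a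
  list of composable arrows es; (i, []) is the length-zero path e_i.\<close>

definition is_path :: "nat \<Rightarrow> 'e set \<Rightarrow> ('e \<Rightarrow> nat) \<Rightarrow> ('e \<Rightarrow> nat) \<Rightarrow> nat \<times> 'e list \<Rightarrow> bool" where
  "is_path n E s t p \<longleftrightarrow>
     fst p \<in> {1..n} \<and> set (snd p) \<subseteq> E \<and>
     (snd p \<noteq> [] \<longrightarrow> s (hd (snd p)) = fst p) \<and>
     (\<forall>k. Suc k < length (snd p) \<longrightarrow> t (snd p ! k) = s (snd p ! Suc k))"

definition path_end :: "('e \<Rightarrow> nat) \<Rightarrow> nat \<times> 'e list \<Rightarrow> nat" where
  "path_end t p = (if snd p = [] then fst p else t (last (snd p)))"

definition has_path :: "nat \<Rightarrow> 'e set \<Rightarrow> ('e \<Rightarrow> nat) \<Rightarrow> ('e \<Rightarrow> nat) \<Rightarrow> nat \<Rightarrow> nat \<Rightarrow> bool" where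
  "has_path n E s t i j \<longleftrightarrow> (\<exists>p. is_path n E s t p \<and> fst p = i \<and> path_end t p = j)"

definition path_alg :: "nat \<Rightarrow> 'e set \<Rightarrow> ('e \<Rightarrow> nat) \<Rightarrow> ('e \<Rightarrow> nat)
    \<Rightarrow> ((nat \<times> 'e list) \<Rightarrow>\<^sub>0 'a::zero) set" where
  "path_alg n E s t = {x. \<forall>p\<in>Poly_Mapping.keys x. is_path n E s t p}"

definition pa_mult :: "('e \<Rightarrow> nat) \<Rightarrow> ((nat \<times> 'e list) \<Rightarrow>\<^sub>0 'a::semiring_0)
    \<Rightarrow> ((nat \<times> 'e list) \<Rightarrow>\<^sub>0 'a) \<Rightarrow> ((nat \<times> 'e list) \<Rightarrow>\<^sub>0 'a)" where
  "pa_mult t x y =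
     (\<Sum>p\<in>Poly_Mapping.keys x. \<Sum>q\<in>Poly_Mapping.keys y.
        if path_end t p = fst q
        then Poly_Mapping.single (fst p, snd p @ snd q) (Poly_Mapping.lookup x p * Poly_Mapping.lookup y q)
        else 0)"

definition pa_one :: "nat \<Rightarrow> ((nat \<times> 'e list) \<Rightarrow>\<^sub>0 'a::{zero,one,comm_monoid_add})" where
  "pa_one n = (\<Sum>i\<in>{1..n}. Poly_Mapping.single (i, []) 1)"

definition pa_smult :: "'a::semiring_0 \<Rightarrow> ((nat \<times> 'e list) \<Rightarrow>\<^sub>0 'a) \<Rightarrow> ((nat \<times> 'e list) \<Rightarrow>\<^sub>0 'a)" where
  "pa_smult c x = Poly_Mapping.map (\<lambda>v. c * v) x"

text \<open>An n x n matrix is a function nat => nat => F whose entries outside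
  {1..n} x {1..n} are zero.\<close>

definition mat_mult :: "nat \<Rightarrow> (nat \<Rightarrow> nat \<Rightarrow> 'a::semiring_0) \<Rightarrow> (nat \<Rightarrow> nat \<Rightarrow> 'a) \<Rightarrow> (nat \<Rightarrow> nat \<Rightarrow> 'a)" where
  "mat_mult n A B = (\<lambda>i j. \<Sum>k\<in>{1..n}. A i k * B k j)"

definition mat_one :: "nat \<Rightarrow> (nat \<Rightarrow> nat \<Rightarrow> 'a::{zero,one})" where
  "mat_one n = (\<lambda>i j. if i = j \<and> i \<in> {1..n} then 1 else 0)"

definition mat_smult :: "'a::times \<Rightarrow> (nat \<Rightarrow> nat \<Rightarrow> 'a) \<Rightarrow> (nat \<Rightarrow> nat \<Rightarrow> 'a)" where
  "mat_smult c A = (\<lambda>i j. c * A i j)"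

definition full_mat :: "nat \<Rightarrow> (nat \<Rightarrow> nat \<Rightarrow> 'a::zero) set" where
  "full_mat n = {A. \<forall>i j. A i j \<noteq> 0 \<longrightarrow> i \<in> {1..n} \<and> j \<in> {1..n}}"

definition A_Q :: "nat \<Rightarrow> 'e set \<Rightarrow> ('e \<Rightarrow> nat) \<Rightarrow> ('e \<Rightarrow> nat) \<Rightarrow> (nat \<Rightarrow> nat \<Rightarrow> 'a::zero) set" where
  "A_Q n E s t = {A \<in> full_mat n. \<forall>i j. \<not> has_path n E s t i j \<longrightarrow> A i j = 0}"

definition Id_FQ :: "nat \<Rightarrow> 'e set \<Rightarrow> ('e \<Rightarrow> nat) \<Rightarrow> ('e \<Rightarrow> nat) \<Rightarrow> 'a::comm_ring_1 ncpoly set" where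
  "Id_FQ n E s t =
     PI_Id (pa_mult t) (pa_one n) pa_smult (path_alg n E s t :: ((nat \<times> 'e list) \<Rightarrow>\<^sub>0 'a) set)"

definition Id_AQ :: "nat \<Rightarrow> 'e set \<Rightarrow> ('e \<Rightarrow> nat) \<Rightarrow> ('e \<Rightarrow> nat) \<Rightarrow> 'a::comm_ring_1 ncpoly set" where
  "Id_AQ n E s t =
     PI_Id (mat_mult n) (mat_one n) mat_smult (A_Q n E s t :: (nat \<Rightarrow> nat \<Rightarrow> 'a) set)"

end

theory Submission
  imports Defs "HOL-Computational_Algebra.Polynomial" "HOL-Library.Multiset"
begin

text \<open>For weights \<open>lam\<close> on the arrows, sending a path \<open>p\<close> from \<open>i\<close> to \<open>j\<close> to the matrix unit
  \<open>E\<^sub>i\<^sub>j\<close> scaled by the product of the weights of the arrows of \<open>p\<close> is an algebra homomorphism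
  \<open>FQ \<rightarrow> A\<^sub>Q\<close>; for \<open>lam = 1\<close> it is onto, so \<open>Id(FQ) \<subseteq> Id(A\<^sub>Q)\<close>.

  Conversely, if two distinct paths from one vertex used the same multiset of arrows, then
  where they first diverge one finds two cycles \<open>C\<close>, \<open>D\<close> at a common vertex with different
  first arrows. The words \<open>D\<^sup>k C\<close> form a prefix code, so these paths generate a free
  subalgebra of \<open>FQ\<close> and \<open>FQ\<close> is not PI. Hence in the PI case a path is determined by its start
  and its multiset of arrows, and the \<open>(i, j)\<close> entry of the image of \<open>x\<close> is a polynomial in the
  weights whose monomials correspond bijectively to the paths from \<open>i\<close> to \<open>j\<close> in the support
  of \<open>x\<close>. In characteristic zero such a polynomial vanishes identically only if all its
  coefficients do, so the weighted homomorphisms jointly separate \<open>FQ\<close>, giving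
  \<open>Id(A\<^sub>Q) \<subseteq> Id(FQ)\<close>.\<close>

section \<open>Algebra homomorphisms and polynomial identities\<close>

locale nc_algebra_hom =
  fixes S :: "'b::comm_monoid_add set"
    and mul :: "'b \<Rightarrow> 'b \<Rightarrow> 'b" and one :: 'b and sm :: "'a::zero \<Rightarrow> 'b \<Rightarrow> 'b"
    and mul' :: "'c::comm_monoid_add \<Rightarrow> 'c \<Rightarrow> 'c" and one' :: 'c and sm' :: "'a \<Rightarrow> 'c \<Rightarrow> 'c"
    and h :: "'b \<Rightarrow> 'c"
  assumes zero_closed: "0 \<in> S"
    and add_closed: "x \<in> S \<Longrightarrow> y \<in> S \<Longrightarrow> x + y \<in> S"
    and mul_closed: "x \<in> S \<Longrightarrow> y \<in> S \<Longrightarrow> mul x y \<in> S"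
    and one_closed: "one \<in> S"
    and smult_closed: "x \<in> S \<Longrightarrow> sm c x \<in> S"
    and hom_zero: "h 0 = 0"
    and hom_add: "h (x + y) = h x + h y"
    and hom_mul: "x \<in> S \<Longrightarrow> y \<in> S \<Longrightarrow> h (mul x y) = mul' (h x) (h y)"
    and hom_one: "h one = one'"
    and hom_smult: "h (sm c x) = sm' c (h x)"
begin

lemma sum_closed: "(\<And>a. a \<in> A \<Longrightarrow> F a \<in> S) \<Longrightarrow> sum F A \<in> S"
  by (induction A rule: infinite_finite_induct) (auto intro: zero_closed add_closed)

lemma hom_sum: "h (sum F A) = (\<Sum>a\<in>A. h (F a))"
  by (induction A rule: infinite_finite_induct) (simp_all add: hom_zero hom_add)

lemma eval_word_closed: "(\<And>k. \<phi> k \<in> S) \<Longrightarrow> nc_eval_word mul one \<phi> w \<in> S"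
  unfolding nc_eval_word_def by (induction w) (simp_all add: one_closed mul_closed)

lemma eval_closed: "(\<And>k. \<phi> k \<in> S) \<Longrightarrow> nc_eval mul one sm \<phi> f \<in> S"
  unfolding nc_eval_def by (intro sum_closed smult_closed eval_word_closed)

lemma hom_eval_word:
  assumes "\<And>k. \<phi> k \<in> S"
  shows "h (nc_eval_word mul one \<phi> w) = nc_eval_word mul' one' (h \<circ> \<phi>) w"
proof (induction w)
  case Nil
  show ?case by (simp add: nc_eval_word_def hom_one)
next
  case (Cons a w)
  have "nc_eval_word mul one \<phi> w \<in> S"
    using assms by (rule eval_word_closed)
  with Cons show ?case
    using assms by (simp add: nc_eval_word_def hom_mul)
qed

lemma hom_eval:
  assumes "\<And>k. \<phi> k \<in> S"
  shows "h (nc_eval mul one sm \<phi> f) = nc_eval mul' one' sm' (h \<circ> \<phi>) f"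
  unfolding nc_eval_def hom_sum hom_smult hom_eval_word[OF assms] ..

lemma PI_Id_subset_of_onto:
  assumes onto: "T \<subseteq> h ` S"
  shows "PI_Id mul one sm S \<subseteq> PI_Id mul' one' sm' T"
proof
  fix f assume f: "f \<in> PI_Id mul one sm S"
  have "nc_eval mul' one' sm' \<psi> f = 0" if \<psi>: "\<forall>k. \<psi> k \<in> T" for \<psi>
  proof -
    define \<phi> where "\<phi> = inv_into S h \<circ> \<psi>"
    have "\<psi> k \<in> h ` S" for k
      using \<psi> onto by blast
    then have \<phi>: "\<phi> k \<in> S" and \<psi>_eq: "h (\<phi> k) = \<psi> k" for k
      unfolding \<phi>_def by (simp_all add: inv_into_into f_inv_into_f)
    have "nc_eval mul' one' sm' \<psi> f = h (nc_eval mul one sm \<phi> f)"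
      using \<psi>_eq by (simp add: hom_eval[OF \<phi>] comp_def)
    also have "nc_eval mul one sm \<phi> f = 0"
      using f \<phi> unfolding PI_Id_def by blast
    finally show ?thesis by (simp add: hom_zero)
  qed
  then show "f \<in> PI_Id mul' one' sm' T"
    unfolding PI_Id_def by blast
qed

end

lemma PI_Id_subset_of_separating_homs:
  assumes hom: "\<And>l. nc_algebra_hom S mul one sm mul' one' sm' (h l)"
    and into: "\<And>l x. x \<in> S \<Longrightarrow> h l x \<in> T"
    and separating: "\<And>x. x \<in> S \<Longrightarrow> (\<And>l. h l x = 0) \<Longrightarrow> x = 0"
  shows "PI_Id mul' one' sm' T \<subseteq> PI_Id mul one sm S"
proof
  fix f assume f: "f \<in> PI_Id mul' one' sm' T"
  have "nc_eval mul one sm \<phi> f = 0" if \<phi>: "\<forall>k. \<phi> k \<in> S" for \<phi>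
  proof (rule separating)
    show "nc_eval mul one sm \<phi> f \<in> S"
      using \<phi> nc_algebra_hom.eval_closed[OF hom] by blast
    fix l
    have "h l (nc_eval mul one sm \<phi> f) = nc_eval mul' one' sm' (h l \<circ> \<phi>) f"
      using \<phi> nc_algebra_hom.hom_eval[OF hom] by blast
    also have "\<dots> = 0"
      using f \<phi> into unfolding PI_Id_def by simp
    finally show "h l (nc_eval mul one sm \<phi> f) = 0" .
  qed
  then show "f \<in> PI_Id mul one sm S"
    unfolding PI_Id_def by blast
qed

section \<open>Paths and cycles\<close>

lemma successively_iff_nth:
  "successively P xs \<longleftrightarrow> (\<forall>k. Suc k < length xs \<longrightarrow> P (xs ! k) (xs ! Suc k))"
  by (induction xs) (auto simp: successively_Cons nth_Cons hd_conv_nth split: nat.splits)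

lemma is_path_Pair_iff:
  "is_path n E s t (v, xs) \<longleftrightarrow>
     v \<in> {1..n} \<and> set xs \<subseteq> E \<and> (xs \<noteq> [] \<longrightarrow> s (hd xs) = v) \<and> successively (\<lambda>a b. t a = s b) xs"
  unfolding is_path_def successively_iff_nth by simp

lemma path_end_append: "path_end t (v, xs @ ys) = path_end t (path_end t (v, xs), ys)"
  unfolding path_end_def by simp

lemma path_end_in_vertices:
  assumes arrows: "\<forall>e\<in>E. s e \<in> {1..n} \<and> t e \<in> {1..n}" and "is_path n E s t p"
  shows "path_end t p \<in> {1..n}"
  using assms unfolding is_path_def path_end_def by (auto dest!: last_in_set)

lemma is_path_append:
  assumes "is_path n E s t (v, xs)" "is_path n E s t (path_end t (v, xs), ys)"
  shows "is_path n E s t (v, xs @ ys)"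
  using assms unfolding is_path_Pair_iff path_end_def successively_append_iff
  by (cases "xs = []"; cases "ys = []") auto

lemma is_path_append_iff:
  assumes arrows: "\<forall>e\<in>E. s e \<in> {1..n} \<and> t e \<in> {1..n}"
  shows "is_path n E s t (v, xs @ ys) \<longleftrightarrow>
    is_path n E s t (v, xs) \<and> is_path n E s t (path_end t (v, xs), ys)"
proof
  assume path: "is_path n E s t (v, xs @ ys)"
  then have prefix: "is_path n E s t (v, xs)"
    unfolding is_path_Pair_iff successively_append_iff by (cases "xs = []") simp_all
  have "path_end t (v, xs) \<in> {1..n}"
    using arrows prefix by (rule path_end_in_vertices)
  moreover have "s (hd ys) = path_end t (v, xs)" if "ys \<noteq> []"
    using path that unfolding is_path_Pair_iff successively_append_iff path_end_def
    by (cases "xs = []") simp_all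
  ultimately have "is_path n E s t (path_end t (v, xs), ys)"
    using path unfolding is_path_Pair_iff successively_append_iff by simp
  with prefix show "is_path n E s t (v, xs) \<and> is_path n E s t (path_end t (v, xs), ys)" ..
qed (use is_path_append in blast)

definition is_cycle :: "nat \<Rightarrow> 'e set \<Rightarrow> ('e \<Rightarrow> nat) \<Rightarrow> ('e \<Rightarrow> nat) \<Rightarrow> nat \<Rightarrow> 'e list \<Rightarrow> bool" where
  "is_cycle n E s t u C \<longleftrightarrow> is_path n E s t (u, C) \<and> path_end t (u, C) = u"

lemma is_cycle_append:
  "is_cycle n E s t u C \<Longrightarrow> is_cycle n E s t u D \<Longrightarrow> is_cycle n E s t u (C @ D)"
  unfolding is_cycle_def by (simp add: is_path_append path_end_append)

lemma is_cycle_prefix_before_return: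
  assumes arrows: "\<forall>e\<in>E. s e \<in> {1..n} \<and> t e \<in> {1..n}"
    and path: "is_path n E s t (u, a # xs)" and b: "b \<in> set xs" "s b = u"
  obtains C where "is_cycle n E s t u (a # C)"
proof -
  obtain C D where xs: "xs = C @ b # D"
    using b(1) by (meson split_list)
  have "is_path n E s t (u, (a # C) @ b # D)"
    using path xs by simp
  then have "is_path n E s t (u, a # C)" and "s b = path_end t (u, a # C)"
    unfolding is_path_append_iff[OF arrows] by (auto simp: is_path_Pair_iff)
  with b(2) show thesis
    by (intro that) (simp add: is_cycle_def)
qed

lemma distinct_cycles_of_ambiguous_paths:
  assumes arrows: "\<forall>e\<in>E. s e \<in> {1..n} \<and> t e \<in> {1..n}"
    and paths: "is_path n E s t (i, xs)" "is_path n E s t (i, ys)"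
    and same_arrows: "mset xs = mset ys" and "xs \<noteq> ys"
  obtains u a b C D where "a \<noteq> b" "is_cycle n E s t u (a # C)" "is_cycle n E s t u (b # D)"
proof -
  obtain ps xs' ys' where xs: "xs = ps @ xs'" and ys: "ys = ps @ ys'"
    and diverge: "xs' = [] \<or> ys' = [] \<or> hd xs' \<noteq> hd ys'"
    using longest_common_prefix by blast
  have mset': "mset xs' = mset ys'"
    using same_arrows xs ys by simp
  have "xs' \<noteq> ys'"
    using \<open>xs \<noteq> ys\<close> xs ys by blast
  then obtain a xr b yr where xs': "xs' = a # xr" and ys': "ys' = b # yr" and "a \<noteq> b"
    using diverge mset' by (cases xs'; cases ys') auto
  define u where "u = path_end t (i, ps)"
  have pa: "is_path n E s t (u, a # xr)" and pb: "is_path n E s t (u, b # yr)"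
    using paths unfolding xs ys xs' ys' u_def is_path_append_iff[OF arrows] by auto
  then have "s a = u" "s b = u"
    by (simp_all add: is_path_Pair_iff)
  moreover have "set (a # xr) = set (b # yr)"
    using mset' unfolding xs' ys' by (metis set_mset_mset)
  then have "b \<in> set xr" "a \<in> set yr"
    using \<open>a \<noteq> b\<close> by auto
  ultimately obtain C D where "is_cycle n E s t u (a # C)" "is_cycle n E s t u (b # D)"
    using is_cycle_prefix_before_return[OF arrows pa] is_cycle_prefix_before_return[OF arrows pb]
    by metis
  with \<open>a \<noteq> b\<close> show thesis
    by (rule that)
qed

section \<open>The path algebra and its weighted matrix representations\<close>

lemma lookup_pa_smult: "Poly_Mapping.lookup (pa_smult c x) p = c * Poly_Mapping.lookup x p"
  unfolding pa_smult_def by (simp add: Poly_Mapping.map.rep_eq when_def)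

lemma keys_pa_smult_subset: "Poly_Mapping.keys (pa_smult c x) \<subseteq> Poly_Mapping.keys x"
  by (auto simp: in_keys_iff lookup_pa_smult)

lemma keys_pa_mult_subset:
  "Poly_Mapping.keys (pa_mult t x y) \<subseteq>
     {(fst p, snd p @ snd q) | p q. p \<in> Poly_Mapping.keys x \<and> q \<in> Poly_Mapping.keys y \<and> path_end t p = fst q}"
  unfolding pa_mult_def
  by (rule order.trans[OF keys_sum] UN_least order.trans[OF keys_sum])+ (auto split: if_splits; blast)

lemma lookup_pa_one:
  "Poly_Mapping.lookup (pa_one n) (i, w) = (if w = [] \<and> i \<in> {1..n} then 1 else 0)"
  unfolding pa_one_def lookup_sum by (cases "w = []") (auto simp: lookup_single when_def)

lemma pa_mult_closed:
  assumes "x \<in> path_alg n E s t" "y \<in> path_alg n E s t"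
  shows "pa_mult t x y \<in> path_alg n E s t"
  using assms keys_pa_mult_subset[of t x y]
  unfolding path_alg_def by (fastforce intro: is_path_append)

lemma pa_one_closed: "pa_one n \<in> path_alg n E s t"
  unfolding path_alg_def by (auto simp: in_keys_iff lookup_pa_one is_path_def split: if_splits)

lemma path_alg_zero_closed: "0 \<in> path_alg n E s t"
  by (simp add: path_alg_def)

lemma path_alg_add_closed: "x \<in> path_alg n E s t \<Longrightarrow> y \<in> path_alg n E s t \<Longrightarrow> x + y \<in> path_alg n E s t"
  using keys_add[of x y] unfolding path_alg_def by blast

lemma path_alg_sum_closed: "(\<And>a. a \<in> A \<Longrightarrow> F a \<in> path_alg n E s t) \<Longrightarrow> sum F A \<in> path_alg n E s t"
  using keys_sum[of F A] unfolding path_alg_def by blast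

lemma single_in_path_alg: "is_path n E s t p \<Longrightarrow> Poly_Mapping.single p c \<in> path_alg n E s t"
  unfolding path_alg_def by simp

lemma pa_smult_closed: "x \<in> path_alg n E s t \<Longrightarrow> pa_smult c x \<in> path_alg n E s t"
  using keys_pa_smult_subset[of c x] unfolding path_alg_def by blast

lemma pa_mult_single_single:
  "pa_mult t (Poly_Mapping.single p (1::'a::semiring_1)) (Poly_Mapping.single q 1) =
    (if path_end t p = fst q then Poly_Mapping.single (fst p, snd p @ snd q) 1 else 0)"
  unfolding pa_mult_def by simp

lemma pa_mult_single_pa_one:
  fixes p :: "nat \<times> 'e list"
  assumes "path_end t p \<in> {1..n}"
  shows "pa_mult t (Poly_Mapping.single p (1::'a::semiring_1)) (pa_one n) = Poly_Mapping.single p 1"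
proof -
  have keys_one: "Poly_Mapping.keys (pa_one n :: _ \<Rightarrow>\<^sub>0 'a) = (\<lambda>i. (i, [])) ` {1..n}"
    by (auto simp: in_keys_iff lookup_pa_one image_iff split: if_splits)
  have "pa_mult t (Poly_Mapping.single p (1::'a)) (pa_one n) =
     (\<Sum>q\<in>Poly_Mapping.keys (pa_one n :: _ \<Rightarrow>\<^sub>0 'a). if path_end t p = fst q
        then Poly_Mapping.single (fst p, snd p @ snd q) (Poly_Mapping.lookup (pa_one n) q) else 0)"
    unfolding pa_mult_def by (simp cong: if_cong)
  also have "\<dots> = (\<Sum>q\<in>(\<lambda>i. (i, [] :: 'e list)) ` {1..n}. if q = (path_end t p, []) then Poly_Mapping.single p 1 else 0)"
    unfolding keys_one by (intro sum.cong refl) (auto simp: lookup_pa_one)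
  also have "\<dots> = Poly_Mapping.single p 1"
    using assms by (subst sum.delta) auto
  finally show ?thesis .
qed

definition path_weight :: "('e \<Rightarrow> 'a::comm_semiring_1) \<Rightarrow> nat \<times> 'e list \<Rightarrow> 'a" where
  "path_weight lam p = prod_list (map lam (snd p))"

definition pa_mat :: "('e \<Rightarrow> nat) \<Rightarrow> ('e \<Rightarrow> 'a::comm_semiring_1) \<Rightarrow> ((nat \<times> 'e list) \<Rightarrow>\<^sub>0 'a) \<Rightarrow> nat \<Rightarrow> nat \<Rightarrow> 'a" where
  "pa_mat t lam x i j =
     (\<Sum>p\<in>Poly_Mapping.keys x. if fst p = i \<and> path_end t p = j then Poly_Mapping.lookup x p * path_weight lam p else 0)"

lemma pa_mat_eq_sum_superset:
  assumes "finite K" "Poly_Mapping.keys x \<subseteq> K"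
  shows "pa_mat t lam x i j =
    (\<Sum>p\<in>K. if fst p = i \<and> path_end t p = j then Poly_Mapping.lookup x p * path_weight lam p else 0)"
  unfolding pa_mat_def by (rule sum.mono_neutral_left) (use assms in \<open>auto simp: in_keys_iff\<close>)

lemma pa_mat_zero: "pa_mat t lam 0 = 0"
  by (simp add: pa_mat_def fun_eq_iff)

lemma pa_mat_add: "pa_mat t lam (x + y) = pa_mat t lam x + pa_mat t lam y"
proof (intro ext)
  fix i j
  let ?K = "Poly_Mapping.keys x \<union> Poly_Mapping.keys y"
  have "finite ?K" "Poly_Mapping.keys x \<subseteq> ?K" "Poly_Mapping.keys y \<subseteq> ?K" "Poly_Mapping.keys (x + y) \<subseteq> ?K"
    using keys_add[of x y] by auto
  then show "pa_mat t lam (x + y) i j = (pa_mat t lam x + pa_mat t lam y) i j"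
    by (simp add: pa_mat_eq_sum_superset[of ?K] lookup_add distrib_right sum.distrib[symmetric] if_distrib
        cong: if_cong)
qed

lemma sum_fun_apply: "sum F A x = (\<Sum>a\<in>A. F a x)"
  by (induction A rule: infinite_finite_induct) auto

lemma pa_mat_sum: "pa_mat t lam (sum F A) = (\<Sum>a\<in>A. pa_mat t lam (F a))"
  by (induction A rule: infinite_finite_induct) (simp_all add: pa_mat_zero pa_mat_add)

lemma pa_mat_single:
  "pa_mat t lam (Poly_Mapping.single p c) i j = (if fst p = i \<and> path_end t p = j then c * path_weight lam p else 0)"
  by (subst pa_mat_eq_sum_superset[of "{p}"]) auto

lemma pa_mat_smult: "pa_mat t lam (pa_smult c x) = mat_smult c (pa_mat t lam x)"
  unfolding mat_smult_def
  by (intro ext, subst (1 2) pa_mat_eq_sum_superset[of "Poly_Mapping.keys x"])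
    (auto simp: keys_pa_smult_subset lookup_pa_smult sum_distrib_left mult.assoc intro!: sum.cong)

lemma path_weight_append: "path_weight lam (i, snd p @ snd q) = path_weight lam p * path_weight lam q"
  by (simp add: path_weight_def)

lemma pa_mat_mult:
  assumes arrows: "\<forall>e\<in>E. s e \<in> {1..n} \<and> t e \<in> {1..n}" and x: "x \<in> path_alg n E s t"
  shows "pa_mat t lam (pa_mult t x y) = mat_mult n (pa_mat t lam x) (pa_mat t lam y)"
proof (intro ext)
  fix i j
  let ?X = "\<lambda>p k. if fst p = i \<and> path_end t p = k then Poly_Mapping.lookup x p * path_weight lam p else 0"
  let ?Y = "\<lambda>q k. if fst q = k \<and> path_end t q = j then Poly_Mapping.lookup y q * path_weight lam q else 0"
  have "pa_mat t lam (pa_mult t x y) i j =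
      (\<Sum>p\<in>Poly_Mapping.keys x. \<Sum>q\<in>Poly_Mapping.keys y. ?X p (fst q) * ?Y q (fst q))"
    unfolding pa_mult_def pa_mat_sum sum_fun_apply
    by (intro sum.cong refl) (auto simp: pa_mat_single pa_mat_zero path_end_def path_weight_append mult_ac)
  also have "\<dots> = (\<Sum>p\<in>Poly_Mapping.keys x. \<Sum>q\<in>Poly_Mapping.keys y. \<Sum>k\<in>{1..n}. ?X p k * ?Y q k)"
  proof (intro sum.cong refl)
    fix p q assume "p \<in> Poly_Mapping.keys x"
    then have "path_end t p \<in> {1..n}"
      using x arrows path_end_in_vertices unfolding path_alg_def by blast
    have "(\<Sum>k\<in>{1..n}. ?X p k * ?Y q k) = (\<Sum>k\<in>{1..n}. if k = path_end t p then ?X p k * ?Y q k else 0)"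
      by (intro sum.cong) auto
    also have "\<dots> = ?X p (path_end t p) * ?Y q (path_end t p)"
      using \<open>path_end t p \<in> {1..n}\<close> by (subst sum.delta) simp_all
    also have "\<dots> = ?X p (fst q) * ?Y q (fst q)"
      by auto
    finally show "?X p (fst q) * ?Y q (fst q) = (\<Sum>k\<in>{1..n}. ?X p k * ?Y q k)" ..
  qed
  also have "\<dots> = (\<Sum>p\<in>Poly_Mapping.keys x. \<Sum>k\<in>{1..n}. \<Sum>q\<in>Poly_Mapping.keys y. ?X p k * ?Y q k)"
    by (intro sum.cong refl sum.swap)
  also have "\<dots> = (\<Sum>k\<in>{1..n}. \<Sum>p\<in>Poly_Mapping.keys x. \<Sum>q\<in>Poly_Mapping.keys y. ?X p k * ?Y q k)"
    by (rule sum.swap)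
  also have "\<dots> = mat_mult n (pa_mat t lam x) (pa_mat t lam y) i j"
    unfolding mat_mult_def pa_mat_def sum_product ..
  finally show "pa_mat t lam (pa_mult t x y) i j = mat_mult n (pa_mat t lam x) (pa_mat t lam y) i j" .
qed

lemma pa_mat_one: "pa_mat t lam (pa_one n) = mat_one n"
proof (intro ext)
  fix i j
  have "pa_mat t lam (pa_one n) i j = (\<Sum>k\<in>{1..n}. if k = i \<and> k = j then 1 else 0)"
    unfolding pa_one_def pa_mat_sum sum_fun_apply
    by (intro sum.cong refl) (auto simp: pa_mat_single path_end_def path_weight_def)
  also have "\<dots> = mat_one n i j"
    unfolding mat_one_def by (cases "i = j") (auto intro: sum.neutral)
  finally show "pa_mat t lam (pa_one n) i j = mat_one n i j" .
qed

lemma nc_algebra_hom_pa_mat: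
  assumes arrows: "\<forall>e\<in>E. s e \<in> {1..n} \<and> t e \<in> {1..n}"
  shows "nc_algebra_hom (path_alg n E s t) (pa_mult t) (pa_one n) pa_smult
    (mat_mult n) (mat_one n) mat_smult (pa_mat t lam)"
  by unfold_locales
    (simp_all add: path_alg_zero_closed path_alg_add_closed pa_mult_closed pa_one_closed pa_smult_closed
      pa_mat_zero pa_mat_add pa_mat_mult[OF arrows] pa_mat_one pa_mat_smult)

lemma pa_mat_in_A_Q:
  assumes arrows: "\<forall>e\<in>E. s e \<in> {1..n} \<and> t e \<in> {1..n}" and x: "x \<in> path_alg n E s t"
  shows "pa_mat t lam x \<in> A_Q n E s t"
proof -
  have "i \<in> {1..n} \<and> j \<in> {1..n} \<and> has_path n E s t i j" if "pa_mat t lam x i j \<noteq> 0" for i j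
  proof -
    have "\<exists>p\<in>Poly_Mapping.keys x. fst p = i \<and> path_end t p = j"
    proof (rule ccontr)
      assume "\<not> ?thesis"
      then have "pa_mat t lam x i j = 0"
        unfolding pa_mat_def by (intro sum.neutral) auto
      with that show False ..
    qed
    then obtain p where "is_path n E s t p" "fst p = i" "path_end t p = j"
      using x unfolding path_alg_def by blast
    then show ?thesis
      using path_end_in_vertices[OF arrows] unfolding has_path_def is_path_def by blast
  qed
  then show ?thesis
    unfolding A_Q_def full_mat_def by blast
qed

lemma A_Q_subset_pa_mat_image: "A_Q n E s t \<subseteq> pa_mat t (\<lambda>_. 1) ` path_alg n E s t"
proof
  fix A :: "nat \<Rightarrow> nat \<Rightarrow> 'a" assume A: "A \<in> A_Q n E s t"
  define R where "R = {(i, j). i \<in> {1..n} \<and> j \<in> {1..n} \<and> has_path n E s t i j}"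
  define P where "P i j = (SOME p. is_path n E s t p \<and> fst p = i \<and> path_end t p = j)" for i j
  have P: "is_path n E s t (P i j) \<and> fst (P i j) = i \<and> path_end t (P i j) = j" if "(i, j) \<in> R" for i j
  proof -
    have "\<exists>p. is_path n E s t p \<and> fst p = i \<and> path_end t p = j"
      using that unfolding R_def has_path_def by blast
    then show ?thesis
      unfolding P_def by (rule someI_ex)
  qed
  define x where "x = (\<Sum>(i, j)\<in>R. Poly_Mapping.single (P i j) (A i j))"
  have "x \<in> path_alg n E s t"
    unfolding x_def using P by (auto intro!: path_alg_sum_closed single_in_path_alg)
  moreover have "pa_mat t (\<lambda>_. 1) x = A"
  proof (intro ext)
    fix i j
    have "finite R"
      by (rule finite_subset[of _ "{1..n} \<times> {1..n}"]) (auto simp: R_def)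
    have single: "pa_mat t (\<lambda>_. 1) (Poly_Mapping.single (P k l) (A k l)) i j = (if (k, l) = (i, j) then A i j else 0)"
      if "(k, l) \<in> R" for k l
      using P[OF that] by (auto simp: pa_mat_single path_weight_def map_replicate_const)
    have "pa_mat t (\<lambda>_. 1) x i j = (\<Sum>r\<in>R. if r = (i, j) then A i j else 0)"
      unfolding x_def pa_mat_sum sum_fun_apply
      by (intro sum.cong refl) (auto simp: single split: prod.splits)
    also have "\<dots> = A i j"
      using A \<open>finite R\<close> unfolding R_def A_Q_def full_mat_def by (auto simp: sum.delta)
    finally show "pa_mat t (\<lambda>_. 1) x i j = A i j" .
  qed
  ultimately show "A \<in> pa_mat t (\<lambda>_. 1) ` path_alg n E s t"
    by blast
qed

lemma Id_FQ_subset_Id_AQ: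
  assumes arrows: "\<forall>e\<in>E. s e \<in> {1..n} \<and> t e \<in> {1..n}"
  shows "(Id_FQ n E s t :: 'a::comm_ring_1 ncpoly set) \<subseteq> Id_AQ n E s t"
  unfolding Id_FQ_def Id_AQ_def
  by (rule nc_algebra_hom.PI_Id_subset_of_onto[OF nc_algebra_hom_pa_mat[OF arrows] A_Q_subset_pa_mat_image])

section \<open>Vanishing polynomial functions\<close>

lemma sum_coeffs_of_exponent_eq_0:
  fixes d :: "'p \<Rightarrow> 'a::{idom, ring_char_0}"
  assumes "finite P" and vanishing: "\<And>z. (\<Sum>p\<in>P. d p * z ^ e p) = 0"
  shows "(\<Sum>p\<in>{p\<in>P. e p = k}. d p) = 0"
proof -
  let ?f = "\<Sum>p\<in>P. monom (d p) (e p)"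
  have "\<forall>z. poly ?f z = 0"
    using vanishing by (simp add: poly_sum poly_monom)
  then have "coeff ?f k = 0"
    by (simp add: poly_all_0_iff_0)
  then show ?thesis
    using \<open>finite P\<close> by (simp add: coeff_sum coeff_monom sum.inter_filter)
qed

lemma monomial_coeff_eq_0:
  fixes c :: "'p \<Rightarrow> 'a::{idom, ring_char_0}" and m :: "'p \<Rightarrow> 'v \<Rightarrow> nat"
  assumes "finite V" "finite P"
    and distinct: "\<forall>p\<in>P. \<forall>q\<in>P. (\<forall>a\<in>V. m p a = m q a) \<longrightarrow> p = q"
    and vanishing: "\<And>lam. (\<Sum>p\<in>P. c p * (\<Prod>a\<in>V. lam a ^ m p a)) = 0"
    and "p0 \<in> P"
  shows "c p0 = 0"
  using assms(1) assms(2-)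
proof (induction V arbitrary: P rule: finite_induct)
  case empty
  then have "P = {p0}" by auto
  then show ?case using empty.prems(3) by simp
next
  case (insert a V)
  define P' where "P' = {p\<in>P. m p a = m p0 a}"
  show ?case
  proof (rule insert.IH)
    show "finite P'" "p0 \<in> P'" "\<forall>p\<in>P'. \<forall>q\<in>P'. (\<forall>b\<in>V. m p b = m q b) \<longrightarrow> p = q"
      using insert.prems unfolding P'_def by auto
    fix lam :: "'v \<Rightarrow> 'a"
    have "(\<Sum>p\<in>P. (c p * (\<Prod>b\<in>V. lam b ^ m p b)) * z ^ m p a) = 0" for z
    proof -
      have "(\<Prod>b\<in>V. (lam(a := z)) b ^ m p b) = (\<Prod>b\<in>V. lam b ^ m p b)" for p
        using \<open>a \<notin> V\<close> by (intro prod.cong) auto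
      then have "(\<Prod>b\<in>insert a V. (lam(a := z)) b ^ m p b) = z ^ m p a * (\<Prod>b\<in>V. lam b ^ m p b)" for p
        using insert.hyps by simp
      then show ?thesis
        using insert.prems(3)[of "lam(a := z)"] by (simp add: mult_ac)
    qed
    then show "(\<Sum>p\<in>P'. c p * (\<Prod>b\<in>V. lam b ^ m p b)) = 0"
      unfolding P'_def by (rule sum_coeffs_of_exponent_eq_0[OF \<open>finite P\<close>])
  qed
qed

lemma prod_list_map_eq_prod_count:
  fixes f :: "'v \<Rightarrow> 'a::comm_monoid_mult"
  assumes "finite V" "set xs \<subseteq> V"
  shows "prod_list (map f xs) = (\<Prod>a\<in>V. f a ^ count (mset xs) a)"
  using assms(2)
proof (induction xs)
  case (Cons x xs)
  have "(\<Prod>a\<in>V. f a ^ count (mset (x # xs)) a) = (\<Prod>a\<in>V. (if a = x then f a else 1) * f a ^ count (mset xs) a)"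
    by (intro prod.cong) auto
  also have "\<dots> = f x * (\<Prod>a\<in>V. f a ^ count (mset xs) a)"
    using Cons.prems \<open>finite V\<close> by (simp add: prod.distrib prod.delta')
  finally show ?case
    using Cons by simp
qed simp

section \<open>Two cycles at a vertex rule out identities\<close>

definition cycle_code :: "'e list \<Rightarrow> 'e list \<Rightarrow> nat \<Rightarrow> 'e list" where
  "cycle_code C D k = concat (replicate k D) @ C"

definition cycle_word :: "'e list \<Rightarrow> 'e list \<Rightarrow> nat list \<Rightarrow> 'e list" where
  "cycle_word C D w = concat (map (cycle_code C D) w)"

lemma cycle_code_append_inject:
  assumes "C \<noteq> []" "D \<noteq> []" "hd C \<noteq> hd D"
  shows "cycle_code C D k @ r = cycle_code C D k' @ r' \<Longrightarrow> k = k' \<and> r = r'"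
proof (induction k arbitrary: k')
  case 0
  show ?case
  proof (cases k')
    case (Suc l)
    with "0.prems" have "hd (C @ r) = hd (D @ cycle_code C D l @ r')"
      by (simp add: cycle_code_def)
    with assms show ?thesis by simp
  qed (use "0.prems" in \<open>simp add: cycle_code_def\<close>)
next
  case (Suc k)
  show ?case
  proof (cases k')
    case 0
    with Suc.prems have "hd (D @ cycle_code C D k @ r) = hd (C @ r')"
      by (simp add: cycle_code_def)
    with assms show ?thesis by simp
  next
    case (Suc l)
    with Suc.prems have "cycle_code C D k @ r = cycle_code C D l @ r'"
      by (simp add: cycle_code_def)
    with Suc.IH \<open>k' = Suc l\<close> show ?thesis by simp
  qed
qed

lemma cycle_word_inject:
  assumes "C \<noteq> []" "D \<noteq> []" "hd C \<noteq> hd D"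
  shows "cycle_word C D w = cycle_word C D w' \<longleftrightarrow> w = w'"
proof
  show "cycle_word C D w = cycle_word C D w' \<Longrightarrow> w = w'"
  proof (induction w arbitrary: w')
    case Nil
    then show ?case
      using assms by (cases w') (simp_all add: cycle_word_def cycle_code_def)
  next
    case (Cons k w)
    show ?case
    proof (cases w')
      case Nil
      with Cons.prems show ?thesis
        using assms by (simp add: cycle_word_def cycle_code_def)
    next
      case (Cons l w'')
      with Cons.prems have "cycle_code C D k @ cycle_word C D w = cycle_code C D l @ cycle_word C D w''"
        by (simp add: cycle_word_def)
      with Cons.IH \<open>w' = l # w''\<close> show ?thesis
        using cycle_code_append_inject[OF assms] by blast
    qed
  qed
qed simp

lemma is_cycle_cycle_code:
  "is_cycle n E s t u C \<Longrightarrow> is_cycle n E s t u D \<Longrightarrow> is_cycle n E s t u (cycle_code C D k)"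
  unfolding cycle_code_def by (induction k) (simp_all add: is_cycle_append)

lemma nc_eval_word_cycle_codes:
  assumes C: "is_cycle n E s t u C" and D: "is_cycle n E s t u D"
  shows "nc_eval_word (pa_mult t) (pa_one n) (\<lambda>k. Poly_Mapping.single (u, cycle_code C D k) (1::'a::semiring_1)) w =
    (if w = [] then pa_one n else Poly_Mapping.single (u, cycle_word C D w) 1)"
proof (induction w)
  case Nil
  show ?case by (simp add: nc_eval_word_def)
next
  case (Cons k w)
  have code: "is_path n E s t (u, cycle_code C D k)" "path_end t (u, cycle_code C D k) = u"
    using is_cycle_cycle_code[OF C D] unfolding is_cycle_def by blast+
  then have "u \<in> {1..n}"
    by (simp add: is_path_def)
  with code Cons.IH show ?case
    by (simp add: nc_eval_word_def cycle_word_def pa_mult_single_pa_one pa_mult_single_single)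
qed

lemma zero_in_Id_FQ: "0 \<in> Id_FQ n E s t"
  unfolding Id_FQ_def PI_Id_def nc_eval_def by simp

lemma Id_FQ_eq_zero_of_distinct_cycles:
  assumes C: "is_cycle n E s t u (a # C)" and D: "is_cycle n E s t u (b # D)" and "a \<noteq> b"
  shows "(Id_FQ n E s t :: 'a::comm_ring_1 ncpoly set) = {0}"
proof -
  define \<phi> where "\<phi> k = Poly_Mapping.single (u, cycle_code (a # C) (b # D) k) (1::'a)" for k
  let ?word = "nc_eval_word (pa_mult t) (pa_one n) \<phi>"
  have "u \<in> {1..n}"
    using C by (simp add: is_cycle_def is_path_def)
  have \<phi>: "\<phi> k \<in> path_alg n E s t" for k
    using is_cycle_cycle_code[OF C D] unfolding \<phi>_def is_cycle_def by (blast intro: single_in_path_alg)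
  have inject: "cycle_word (a # C) (b # D) w = cycle_word (a # C) (b # D) w' \<longleftrightarrow> w = w'" for w w'
    using \<open>a \<noteq> b\<close> by (simp add: cycle_word_inject)
  have Nil_iff: "cycle_word (a # C) (b # D) w = [] \<longleftrightarrow> w = []" for w
    by (cases w) (simp_all add: cycle_word_def cycle_code_def)
  have word: "Poly_Mapping.lookup (?word w) (u, cycle_word (a # C) (b # D) w') = (if w = w' then 1 else 0)" for w w'
    using \<open>u \<in> {1..n}\<close> unfolding \<phi>_def nc_eval_word_cycle_codes[OF C D]
    by (auto simp: lookup_pa_one lookup_single when_def inject Nil_iff)
  have "f = 0" if f: "f \<in> Id_FQ n E s t" for f :: "'a ncpoly"
  proof (rule poly_mapping_eqI)
    fix w'
    have "0 = Poly_Mapping.lookup (nc_eval (pa_mult t) (pa_one n) pa_smult \<phi> f) (u, cycle_word (a # C) (b # D) w')"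
      using f \<phi> unfolding Id_FQ_def PI_Id_def by simp
    also have "\<dots> = (\<Sum>w\<in>Poly_Mapping.keys f. Poly_Mapping.lookup f w * (if w = w' then 1 else 0))"
      unfolding nc_eval_def lookup_sum lookup_pa_smult word ..
    also have "\<dots> = Poly_Mapping.lookup f w'"
      by (auto simp: in_keys_iff if_distrib cong: if_cong)
    finally show "Poly_Mapping.lookup f w' = Poly_Mapping.lookup 0 w'"
      by simp
  qed
  with zero_in_Id_FQ show ?thesis
    by blast
qed

section \<open>Separation by weighted representations\<close>

definition arrow_determined :: "nat \<Rightarrow> 'e set \<Rightarrow> ('e \<Rightarrow> nat) \<Rightarrow> ('e \<Rightarrow> nat) \<Rightarrow> bool" where
  "arrow_determined n E s t \<longleftrightarrow>
     (\<forall>v xs ys. is_path n E s t (v, xs) \<and> is_path n E s t (v, ys) \<and> mset xs = mset ys \<longrightarrow> xs = ys)"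

lemma arrow_determined_if_PI:
  assumes arrows: "\<forall>e\<in>E. s e \<in> {1..n} \<and> t e \<in> {1..n}"
    and PI: "(Id_FQ n E s t :: 'a::comm_ring_1 ncpoly set) \<noteq> {0}"
  shows "arrow_determined n E s t"
  unfolding arrow_determined_def
proof (intro allI impI, elim conjE, rule ccontr)
  fix v xs ys
  assume "is_path n E s t (v, xs)" "is_path n E s t (v, ys)" "mset xs = mset ys" "xs \<noteq> ys"
  then obtain u a b C D where "a \<noteq> b" "is_cycle n E s t u (a # C)" "is_cycle n E s t u (b # D)"
    by (rule distinct_cycles_of_ambiguous_paths[OF arrows])
  then have "(Id_FQ n E s t :: 'a ncpoly set) = {0}"
    by (intro Id_FQ_eq_zero_of_distinct_cycles)
  with PI show False ..
qed

lemma mset_eq_if_count_eq_on: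
  assumes "set xs \<subseteq> V" "set ys \<subseteq> V" "\<forall>a\<in>V. count (mset xs) a = count (mset ys) a"
  shows "mset xs = mset ys"
  using assms by (intro multiset_eqI) (metis count_mset_0_iff subsetD)

lemma pa_mat_eq_sum_monomials:
  assumes "finite E" and x: "x \<in> path_alg n E s t"
  shows "pa_mat t lam x i j = (\<Sum>p\<in>{p \<in> Poly_Mapping.keys x. fst p = i \<and> path_end t p = j}.
    Poly_Mapping.lookup x p * (\<Prod>a\<in>E. lam a ^ count (mset (snd p)) a))"
proof -
  have "set (snd p) \<subseteq> E" if "p \<in> Poly_Mapping.keys x" for p
    using x that unfolding path_alg_def is_path_def by auto
  then show ?thesis
    unfolding pa_mat_def path_weight_def
    by (simp add: sum.inter_filter prod_list_map_eq_prod_count[OF \<open>finite E\<close>] cong: if_cong)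
qed

lemma eq_0_if_pa_mat_eq_0:
  fixes x :: "(nat \<times> 'e list) \<Rightarrow>\<^sub>0 'a::{idom, ring_char_0}"
  assumes "finite E" and determined: "arrow_determined n E s t" and x: "x \<in> path_alg n E s t"
    and vanishing: "\<And>lam. pa_mat t lam x = 0"
  shows "x = 0"
proof (rule poly_mapping_eqI)
  fix p0
  show "Poly_Mapping.lookup x p0 = Poly_Mapping.lookup 0 p0"
  proof (cases "p0 \<in> Poly_Mapping.keys x")
    case True
    define P where "P = {p \<in> Poly_Mapping.keys x. fst p = fst p0 \<and> path_end t p = path_end t p0}"
    have "Poly_Mapping.lookup x p0 = 0"
    proof (rule monomial_coeff_eq_0[OF \<open>finite E\<close>, where m = "\<lambda>p a. count (mset (snd p)) a"])
      show "finite P" "p0 \<in> P"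
        using True unfolding P_def by auto
      show "\<forall>p\<in>P. \<forall>q\<in>P. (\<forall>a\<in>E. count (mset (snd p)) a = count (mset (snd q)) a) \<longrightarrow> p = q"
      proof (intro ballI impI)
        fix p q assume "p \<in> P" "q \<in> P" and counts: "\<forall>a\<in>E. count (mset (snd p)) a = count (mset (snd q)) a"
        then have "is_path n E s t p" "is_path n E s t q" "fst q = fst p"
          using x unfolding P_def path_alg_def by auto
        then have paths: "is_path n E s t (fst p, snd p)" "is_path n E s t (fst p, snd q)"
          by (metis prod.collapse)+
        then have "mset (snd p) = mset (snd q)"
          using counts by (intro mset_eq_if_count_eq_on) (auto simp: is_path_def)
        with paths determined have "snd p = snd q"
          unfolding arrow_determined_def by blast
        with \<open>p \<in> P\<close> \<open>q \<in> P\<close> show "p = q"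
          unfolding P_def by (simp add: prod_eq_iff)
      qed
      show "(\<Sum>p\<in>P. Poly_Mapping.lookup x p * (\<Prod>a\<in>E. lam a ^ count (mset (snd p)) a)) = 0" for lam
        using vanishing[of lam] pa_mat_eq_sum_monomials[OF \<open>finite E\<close> x, of lam "fst p0" "path_end t p0"]
        unfolding P_def by simp
    qed
    then show ?thesis by simp
  qed (simp add: in_keys_iff)
qed

lemma Id_AQ_subset_Id_FQ:
  fixes E :: "'e set"
  assumes "finite E" and arrows: "\<forall>e\<in>E. s e \<in> {1..n} \<and> t e \<in> {1..n}"
    and determined: "arrow_determined n E s t"
  shows "(Id_AQ n E s t :: 'a::{idom, ring_char_0} ncpoly set) \<subseteq> Id_FQ n E s t"
  unfolding Id_FQ_def Id_AQ_def
proof (rule PI_Id_subset_of_separating_homs[where h = "pa_mat t"])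
  show "nc_algebra_hom (path_alg n E s t) (pa_mult t) (pa_one n) pa_smult
    (mat_mult n) (mat_one n) mat_smult (pa_mat t lam)" for lam :: "'e \<Rightarrow> 'a"
    using arrows by (rule nc_algebra_hom_pa_mat)
  show "pa_mat t lam x \<in> A_Q n E s t" if "x \<in> path_alg n E s t" for lam :: "'e \<Rightarrow> 'a" and x
    using arrows that by (rule pa_mat_in_A_Q)
  show "x = 0" if "x \<in> path_alg n E s t" "\<And>lam. pa_mat t lam x = 0" for x :: "_ \<Rightarrow>\<^sub>0 'a"
    using \<open>finite E\<close> determined that by (rule eq_0_if_pa_mat_eq_0)
qed

theorem corollary2:
  fixes n :: nat and E :: "'e set" and s t :: "'e \<Rightarrow> nat"
  assumes "finite E"
    and "\<forall>e\<in>E. s e \<in> {1..n} \<and> t e \<in> {1..n}"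
    and "(Id_FQ n E s t :: 'a::field_char_0 ncpoly set) \<noteq> {0}"
  shows "(Id_FQ n E s t :: 'a::field_char_0 ncpoly set) = Id_AQ n E s t"
proof
  show "(Id_FQ n E s t :: 'a ncpoly set) \<subseteq> Id_AQ n E s t"
    using assms(2) by (rule Id_FQ_subset_Id_AQ)
  have "arrow_determined n E s t"
    using assms(2,3) by (rule arrow_determined_if_PI)
  with assms(1,2) show "(Id_AQ n E s t :: 'a ncpoly set) \<subseteq> Id_FQ n E s t"
    by (rule Id_AQ_subset_Id_FQ)
qed

end
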